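(* Let $\mathcal{A}\in\mathbb{R}^{m\times m\times n}$ be $(1,2)$-symmetric and nonnegative with $$\mathcal{A}=\begin{pmatrix}\mathcal{A}_1&0\\0&\mathcal{A}_2\end{pmatrix},\qquad \mathcal{A}_i\in\mathbb{R}^{m_i\times m_i\times n},\ i=1,2,\quad m_1+m_2=m,$$ where $\mathcal{A}_1$ and $\mathcal{A}_2$ are irreducible. For a $(1,2)$-symmetric tensor $\mathcal{B}\in\mathbb{R}^{k\times k\times n}$ let $$\varphi(\mathcal{B})=\min\{\|\mathcal{B}-(X,X,Z)\cdot\mathcal{H}\|^2:\ X\in\mathbb{R}^{k\times 2},X^TX=I_2,\ Z\in\mathbb{R}^{n\times 2},Z^TZ=I_2,\ \mathcal{H}\in\mathbb{R}^{2\times2\times2}\}.$$ Assume $\varphi(\mathcal{A})<\varphi(\mathcal{A}_1)+\|\mathcal{A}_2\|^2$ and $\varphi(\mathcal{A})<\varphi(\mathcal{A}_2)+\|\mathcal{A}_1\|^2$, and that the solution $(U,U,W)$ of the $(1,2)$-symmetric best rank-$(2,2,2)$ approximation problem for $\mathcal{A}$, with core $\mathcal{F}=\mathcal{A}\cdot(U,U,W)$, is unique. Then a representative of the solution satisfies $$U=\begin{pmatrix}u_1&0\\0&u_2\end{pmatrix},\qquad u_1\in\mathbb{R}^{m_1},\ u_2\in\mathbb{R}^{m_2},$$ and all 3-slices $\mathcal{F}(:,:,k)$ of the corresponding core tensor are diagonal $2\times2$ matrices. The corresponding result holds for the best rank-$(2,2,1)$ approximation (with $W$ replaced by a single unit vector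 $w$ and $Z\in\mathbb{R}^{n\times1}$, $\mathcal{H}\in\mathbb{R}^{2\times2\times1}$ in the definition of $\varphi$).
   Context: A tensor $\mathcal{A}\in\mathbb{R}^{m\times m\times n}$ is $(1,2)$-symmetric if $\mathcal{A}(i,j,k)=\mathcal{A}(j,i,k)$ for all $i,j,k$. It is (1,2)-reducible if there exist a nonempty proper subset $I\subset\{1,\dots,m\}$ and a nonempty $K\subseteq\{1,\dots,n\}$ with $a_{ijk}=a_{jik}=0$ for all $i\in I,j\notin I,k\in K$; 3-reducible if $a_{ijk}=0$ for all $i,j\in I$, $k\in K$; reducible if either holds; irreducible otherwise. Multilinear multiplication: $(X,Y,Z)\cdot\mathcal{H}$ has entries $\sum_{\alpha,\beta,\gamma}x_{i\alpha}y_{j\beta}z_{k\gamma}h_{\alpha\beta\gamma}$, and $\mathcal{A}\cdot(X,Y,Z):=(X^T,Y^T,Z^T)\cdot\mathcal{A}$. Norm is Frobenius. The $(1,2)$-symmetric best rank-$(r_1,r_1,r_3)$ approximation problem is $\max\|\mathcal{A}\cdot(X,X,Z)\|$ over $X^TX=I_{r_1}$, $Z^TZ=I_{r_3}$ (equivalently minimizing $\|\mathcal{A}-(X,X,Z)\cdot\mathcal{H}\|$), with solution $(U,U,W)$ and core $\mathcal{F}=\mathcal{A}\cdot(U,U,W)$. Solutions are equivalence classes under $(U,U,W)\mapsto(UQ_1,UQ_1,WQ_3)$, $Q_1,Q_3$ orthogonal; uniqueness means uniqueness of the class. *)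

theory Defs
  imports "HOL-Analysis.Analysis"
begin

text \<open>A real tensor of size p x q x s is a function
  nat => nat => nat => real, of which only the entries with indices
  i < p, j < q, k < s are relevant (indices start at 0). A real p x r matrix
  is a function nat => nat => real, of which only the entries i < p, a < r
  are relevant.\<close>

type_synonym tensor3 = "nat \<Rightarrow> nat \<Rightarrow> nat \<Rightarrow> real"
type_synonym matr = "nat \<Rightarrow> nat \<Rightarrow> real"

definition tnorm :: "nat \<Rightarrow> nat \<Rightarrow> nat \<Rightarrow> tensor3 \<Rightarrow> real" where
  "tnorm p q s T = sqrt (\<Sum>i<p. \<Sum>j<q. \<Sum>k<s. (T i j k)\<^sup>2)"

definition sym12 :: "nat \<Rightarrow> nat \<Rightarrow> tensor3 \<Rightarrow> bool" where
  "sym12 m n A \<longleftrightarrow> (\<forall>i<m. \<forall>j<m. \<forall>k<n. A i j k = A j i k)"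

definition nonneg_tensor :: "nat \<Rightarrow> nat \<Rightarrow> tensor3 \<Rightarrow> bool" where
  "nonneg_tensor m n A \<longleftrightarrow> (\<forall>i<m. \<forall>j<m. \<forall>k<n. 0 \<le> A i j k)"

definition reducible12 :: "nat \<Rightarrow> nat \<Rightarrow> tensor3 \<Rightarrow> bool" where
  "reducible12 m n A \<longleftrightarrow>
     (\<exists>I K. I \<noteq> {} \<and> I \<subset> {..<m} \<and> K \<noteq> {} \<and> K \<subseteq> {..<n} \<and>
        (\<forall>i\<in>I. \<forall>j\<in>{..<m} - I. \<forall>k\<in>K. A i j k = 0 \<and> A j i k = 0))"

definition reducible3 :: "nat \<Rightarrow> nat \<Rightarrow> tensor3 \<Rightarrow> bool" where
  "reducible3 m n A \<longleftrightarrow>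
     (\<exists>I K. I \<noteq> {} \<and> I \<subset> {..<m} \<and> K \<noteq> {} \<and> K \<subseteq> {..<n} \<and>
        (\<forall>i\<in>I. \<forall>j\<in>I. \<forall>k\<in>K. A i j k = 0))"

definition reducible_tensor :: "nat \<Rightarrow> nat \<Rightarrow> tensor3 \<Rightarrow> bool" where
  "reducible_tensor m n A \<longleftrightarrow> reducible12 m n A \<or> reducible3 m n A"

definition irreducible_tensor :: "nat \<Rightarrow> nat \<Rightarrow> tensor3 \<Rightarrow> bool" where
  "irreducible_tensor m n A \<longleftrightarrow> \<not> reducible_tensor m n A"

definition blockdiag :: "nat \<Rightarrow> tensor3 \<Rightarrow> tensor3 \<Rightarrow> tensor3" where
  "blockdiag m1 A1 A2 = (\<lambda>i j k.
      if i < m1 \<and> j < m1 then A1 i j k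
      else if m1 \<le> i \<and> m1 \<le> j then A2 (i - m1) (j - m1) k
      else 0)"

definition orthonormal_cols :: "nat \<Rightarrow> nat \<Rightarrow> matr \<Rightarrow> bool" where
  "orthonormal_cols p r X \<longleftrightarrow>
     (\<forall>a<r. \<forall>b<r. (\<Sum>i<p. X i a * X i b) = (if a = b then 1 else 0))"

definition mlmult :: "nat \<Rightarrow> nat \<Rightarrow> nat \<Rightarrow> matr \<Rightarrow> matr \<Rightarrow> matr \<Rightarrow> tensor3 \<Rightarrow> tensor3" where
  "mlmult r1 r2 r3 X Y Z H = (\<lambda>i j k.
      \<Sum>\<alpha><r1. \<Sum>\<beta><r2. \<Sum>\<gamma><r3. X i \<alpha> * Y j \<beta> * Z k \<gamma> * H \<alpha> \<beta> \<gamma>)"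

definition tmult :: "nat \<Rightarrow> nat \<Rightarrow> nat \<Rightarrow> tensor3 \<Rightarrow> matr \<Rightarrow> matr \<Rightarrow> matr \<Rightarrow> tensor3" where
  "tmult p1 p2 p3 A X Y Z = (\<lambda>a b c.
      \<Sum>i<p1. \<Sum>j<p2. \<Sum>k<p3. X i a * Y j b * Z k c * A i j k)"

text \<open>phi(B) for a k x k x n tensor B and rank (2,2,r3):
  min of ||B - (X,X,Z).H||^2 over X^T X = I_2, Z^T Z = I_r3, H of size 2 x 2 x r3
  (the minimum exists; it is written as an infimum).\<close>
definition phi :: "nat \<Rightarrow> nat \<Rightarrow> nat \<Rightarrow> tensor3 \<Rightarrow> real" where
  "phi r3 k n B = Inf {(tnorm k k n (\<lambda>i j l. B i j l - mlmult 2 2 r3 X X Z H i j l))\<^sup>2 | X Z H.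
        orthonormal_cols k 2 X \<and> orthonormal_cols n r3 Z}"

text \<open>(U,U,W) solves the (1,2)-symmetric best rank-(2,2,r3) approximation problem
  for the m x m x n tensor A: it maximizes ||A.(X,X,Z)|| over orthonormal X, Z.\<close>
definition best_sol :: "nat \<Rightarrow> nat \<Rightarrow> nat \<Rightarrow> tensor3 \<Rightarrow> matr \<Rightarrow> matr \<Rightarrow> bool" where
  "best_sol r3 m n A U W \<longleftrightarrow>
     orthonormal_cols m 2 U \<and> orthonormal_cols n r3 W \<and>
     (\<forall>X Z. orthonormal_cols m 2 X \<and> orthonormal_cols n r3 Z \<longrightarrow>
        tnorm 2 2 r3 (tmult m m n A X X Z) \<le> tnorm 2 2 r3 (tmult m m n A U U W))"

definition sol_equiv :: "nat \<Rightarrow> nat \<Rightarrow> nat \<Rightarrow> matr \<Rightarrow> matr \<Rightarrow> matr \<Rightarrow> matr \<Rightarrow> bool" where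
  "sol_equiv r3 m n U W U' W' \<longleftrightarrow>
     (\<exists>Q1 Q3. orthonormal_cols 2 2 Q1 \<and> orthonormal_cols r3 r3 Q3 \<and>
        (\<forall>i<m. \<forall>a<2. U' i a = (\<Sum>b<2. U i b * Q1 b a)) \<and>
        (\<forall>k<n. \<forall>c<r3. W' k c = (\<Sum>d<r3. W k d * Q3 d c)))"

definition unique_sol :: "nat \<Rightarrow> nat \<Rightarrow> nat \<Rightarrow> tensor3 \<Rightarrow> bool" where
  "unique_sol r3 m n A \<longleftrightarrow>
     (\<exists>U W. best_sol r3 m n A U W \<and>
        (\<forall>U' W'. best_sol r3 m n A U' W' \<longrightarrow> sol_equiv r3 m n U W U' W'))"

end

theory Submission
  imports Defs
begin

text \<open>Flipping the sign of the coordinates of the second block is a symmetry of a block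
  diagonal tensor, so it maps the best solution U to another best solution, which by uniqueness
  is U Q for an orthogonal Q. Since Q = U^T D U with D the sign matrix, Q is symmetric, hence
  Q = I, Q = -I or Q is a reflection. If Q = \<plusminus>I, the columns of U live in a single block and
  the best approximation error is at least phi(A_1) + ||A_2||^2 (or the symmetric bound),
  contradicting the hypotheses. So Q is a reflection; rotating U into an eigenbasis of Q gives a
  best solution whose first column lives in the first block and second column in the second,
  and then the off-diagonal entries of the core vanish because A has no off-diagonal blocks.\<close>

definition frob_sq :: "nat \<Rightarrow> nat \<Rightarrow> nat \<Rightarrow> tensor3 \<Rightarrow> real" where
  "frob_sq p q s T = (\<Sum>i<p. \<Sum>j<q. \<Sum>k<s. (T i j k)\<^sup>2)"

definition tinner :: "nat \<Rightarrow> nat \<Rightarrow> nat \<Rightarrow> tensor3 \<Rightarrow> tensor3 \<Rightarrow> real" where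
  "tinner p q s S T = (\<Sum>i<p. \<Sum>j<q. \<Sum>k<s. S i j k * T i j k)"

lemma frob_sq_nonneg: "0 \<le> frob_sq p q s T"
  unfolding frob_sq_def by (intro sum_nonneg) auto

lemma tnorm_eq_sqrt_frob_sq: "tnorm p q s T = sqrt (frob_sq p q s T)"
  unfolding tnorm_def frob_sq_def ..

lemma tnorm_squared: "(tnorm p q s T)\<^sup>2 = frob_sq p q s T"
  unfolding tnorm_eq_sqrt_frob_sq using frob_sq_nonneg by simp

lemma tnorm_le_iff: "tnorm p q s T \<le> tnorm p' q' s' T' \<longleftrightarrow> frob_sq p q s T \<le> frob_sq p' q' s' T'"
  unfolding tnorm_eq_sqrt_frob_sq by simp

lemma frob_sq_eq_tinner: "frob_sq p q s T = tinner p q s T T"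
  unfolding frob_sq_def tinner_def by (simp add: power2_eq_square)

lemma tinner_commute: "tinner p q s S T = tinner p q s T S"
  unfolding tinner_def by (simp add: mult.commute)

lemma frob_sq_diff:
  "frob_sq p q s (\<lambda>i j k. S i j k - T i j k) =
     frob_sq p q s S - 2 * tinner p q s S T + frob_sq p q s T"
  unfolding frob_sq_def tinner_def
  by (simp add: power2_diff sum.distrib sum_subtractf sum_distrib_left mult.assoc)

lemma sum_swap3:
  "(\<Sum>i\<in>I. \<Sum>a\<in>A. \<Sum>b\<in>B. \<Sum>c\<in>C. g i a b c) = (\<Sum>a\<in>A. \<Sum>b\<in>B. \<Sum>c\<in>C. \<Sum>i\<in>I. (g i a b c :: real))"
  by (subst sum.swap) (intro sum.cong refl, subst sum.swap, intro sum.cong refl, rule sum.swap)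

lemma sum_swap3_3:
  "(\<Sum>i\<in>I. \<Sum>j\<in>J. \<Sum>k\<in>K. \<Sum>a\<in>A. \<Sum>b\<in>B. \<Sum>c\<in>C. g i j k a b c) =
   (\<Sum>a\<in>A. \<Sum>b\<in>B. \<Sum>c\<in>C. \<Sum>i\<in>I. \<Sum>j\<in>J. \<Sum>k\<in>K. (g i j k a b c :: real))"
proof -
  have "(\<Sum>i\<in>I. \<Sum>j\<in>J. \<Sum>k\<in>K. \<Sum>a\<in>A. \<Sum>b\<in>B. \<Sum>c\<in>C. g i j k a b c) =
        (\<Sum>i\<in>I. \<Sum>j\<in>J. \<Sum>a\<in>A. \<Sum>b\<in>B. \<Sum>c\<in>C. \<Sum>k\<in>K. g i j k a b c)"
    by (intro sum.cong refl sum_swap3)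
  also have "\<dots> = (\<Sum>i\<in>I. \<Sum>a\<in>A. \<Sum>b\<in>B. \<Sum>c\<in>C. \<Sum>j\<in>J. \<Sum>k\<in>K. g i j k a b c)"
    by (intro sum.cong refl sum_swap3)
  also have "\<dots> = (\<Sum>a\<in>A. \<Sum>b\<in>B. \<Sum>c\<in>C. \<Sum>i\<in>I. \<Sum>j\<in>J. \<Sum>k\<in>K. g i j k a b c)"
    by (rule sum_swap3)
  finally show ?thesis .
qed

lemma tinner_mlmult:
  "tinner p q s B (mlmult r1 r2 r3 X Y Z H) = tinner r1 r2 r3 H (tmult p q s B X Y Z)"
  unfolding tinner_def mlmult_def tmult_def
  by (simp add: sum_distrib_left sum_distrib_right mult_ac, subst sum_swap3_3) (simp add: mult_ac)

lemma tmult_mlmult: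
  assumes X: "orthonormal_cols p r1 X" and Y: "orthonormal_cols q r2 Y"
    and Z: "orthonormal_cols s r3 Z" and abc: "a < r1" "b < r2" "c < r3"
  shows "tmult p q s (mlmult r1 r2 r3 X Y Z H) X Y Z a b c = H a b c"
proof -
  let ?E = "\<lambda>i j k. X i a * Y j b * Z k c"
  have "tmult p q s (mlmult r1 r2 r3 X Y Z H) X Y Z a b c = tinner p q s ?E (mlmult r1 r2 r3 X Y Z H)"
    unfolding tmult_def tinner_def by (simp add: mult_ac)
  also have "\<dots> = tinner r1 r2 r3 H (tmult p q s ?E X Y Z)"
    by (rule tinner_mlmult)
  also have "\<dots> = (\<Sum>a'<r1. \<Sum>b'<r2. \<Sum>c'<r3. H a' b' c' *
      ((\<Sum>i<p. X i a' * X i a) * (\<Sum>j<q. Y j b' * Y j b) * (\<Sum>k<s. Z k c' * Z k c)))"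
    unfolding tinner_def tmult_def
    by (simp add: sum_distrib_left sum_distrib_right mult_ac)
      (rule sum.cong[OF refl], rule sum.cong[OF refl], rule sum.cong[OF refl], rule sum.swap)
  also have "\<dots> = (\<Sum>a'<r1. \<Sum>b'<r2. \<Sum>c'<r3.
      if c' = c then if b' = b then if a' = a then H a' b' c' else 0 else 0 else 0)"
    using X Y Z abc unfolding orthonormal_cols_def by (intro sum.cong refl) auto
  also have "\<dots> = H a b c"
    using abc by (simp add: sum.delta')
  finally show ?thesis .
qed

lemma frob_sq_mlmult:
  assumes "orthonormal_cols p r1 X" "orthonormal_cols q r2 Y" "orthonormal_cols s r3 Z"
  shows "frob_sq p q s (mlmult r1 r2 r3 X Y Z H) = frob_sq r1 r2 r3 H"
  unfolding frob_sq_eq_tinner tinner_mlmult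
  using tmult_mlmult[OF assms] unfolding tinner_def by (intro sum.cong refl) auto

text \<open>So for fixed X, Y, Z the optimal core is G.\<close>

lemma approx_error_eq:
  fixes B H :: tensor3
  assumes X: "orthonormal_cols p r1 X" and Y: "orthonormal_cols q r2 Y"
    and Z: "orthonormal_cols s r3 Z"
  defines "G \<equiv> tmult p q s B X Y Z"
  shows "frob_sq p q s (\<lambda>i j k. B i j k - mlmult r1 r2 r3 X Y Z H i j k) =
     frob_sq p q s B - frob_sq r1 r2 r3 G + frob_sq r1 r2 r3 (\<lambda>a b c. H a b c - G a b c)"
  unfolding frob_sq_diff tinner_mlmult frob_sq_mlmult[OF X Y Z] G_def
  by (simp add: tinner_commute)

lemma phi_le:
  assumes X: "orthonormal_cols k 2 X" and Z: "orthonormal_cols n r Z"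
  shows "phi r k n B \<le> frob_sq k k n B - frob_sq 2 2 r (tmult k k n B X X Z)"
proof -
  let ?G = "tmult k k n B X X Z"
  have "phi r k n B \<le> (tnorm k k n (\<lambda>i j l. B i j l - mlmult 2 2 r X X Z ?G i j l))\<^sup>2"
    unfolding phi_def
    by (rule cInf_lower) (use X Z in \<open>auto intro: bdd_belowI[where m=0]\<close>)
  also have "\<dots> = frob_sq k k n B - frob_sq 2 2 r ?G"
    unfolding tnorm_squared approx_error_eq[OF X X Z] by (simp add: frob_sq_def)
  finally show ?thesis .
qed

lemma phi_best_sol:
  assumes best: "best_sol r m n A U W"
  shows "phi r m n A = frob_sq m m n A - frob_sq 2 2 r (tmult m m n A U U W)"
proof (rule antisym)
  show "phi r m n A \<le> frob_sq m m n A - frob_sq 2 2 r (tmult m m n A U U W)"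
    using best unfolding best_sol_def by (blast intro: phi_le)
  show "frob_sq m m n A - frob_sq 2 2 r (tmult m m n A U U W) \<le> phi r m n A"
    unfolding phi_def
  proof (rule cInf_greatest)
    show "{(tnorm m m n (\<lambda>i j l. A i j l - mlmult 2 2 r X X Z H i j l))\<^sup>2 | X Z H.
          orthonormal_cols m 2 X \<and> orthonormal_cols n r Z} \<noteq> {}"
      using best unfolding best_sol_def by blast
  next
    fix x assume "x \<in> {(tnorm m m n (\<lambda>i j l. A i j l - mlmult 2 2 r X X Z H i j l))\<^sup>2 | X Z H.
          orthonormal_cols m 2 X \<and> orthonormal_cols n r Z}"
    then obtain X Z H where x: "x = (tnorm m m n (\<lambda>i j l. A i j l - mlmult 2 2 r X X Z H i j l))\<^sup>2"
      and X: "orthonormal_cols m 2 X" and Z: "orthonormal_cols n r Z" by blast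
    have "frob_sq 2 2 r (tmult m m n A X X Z) \<le> frob_sq 2 2 r (tmult m m n A U U W)"
      using best X Z unfolding best_sol_def tnorm_le_iff by blast
    then show "frob_sq m m n A - frob_sq 2 2 r (tmult m m n A U U W) \<le> x"
      unfolding x tnorm_squared approx_error_eq[OF X X Z] using frob_sq_nonneg by smt
  qed
qed

lemma sum_lessThan_shift_support:
  fixes f :: "nat \<Rightarrow> real"
  assumes "d + k \<le> m" "\<And>i. i < m \<Longrightarrow> \<not> (d \<le> i \<and> i < d + k) \<Longrightarrow> f i = 0"
  shows "(\<Sum>i<m. f i) = (\<Sum>i<k. f (i + d))"
proof -
  have "(\<Sum>i<m. f i) = (\<Sum>i\<in>{d..<d+k}. f i)"
    by (rule sum.mono_neutral_right) (use assms in auto)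
  also have "\<dots> = (\<Sum>i<k. f (i + d))"
    using sum.atLeastLessThan_shift_0[of f d "d + k"] by (simp add: atLeast0LessThan comp_def add.commute)
  finally show ?thesis .
qed

context
  fixes d k m n :: nat and A B :: tensor3 and U :: matr
  assumes fits: "d + k \<le> m"
    and agree: "\<And>i j l. d \<le> i \<Longrightarrow> i < d + k \<Longrightarrow> d \<le> j \<Longrightarrow> j < d + k \<Longrightarrow> l < n
       \<Longrightarrow> A i j l = B (i - d) (j - d) l"
    and supp: "\<And>i a. i < m \<Longrightarrow> a < 2 \<Longrightarrow> \<not> (d \<le> i \<and> i < d + k) \<Longrightarrow> U i a = 0"
begin

lemma tmult_block_support:
  assumes ab: "a < 2" "b < 2"
  shows "tmult m m n A U U W a b c = tmult k k n B (\<lambda>i. U (i + d)) (\<lambda>i. U (i + d)) W a b c"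
proof -
  have "(\<Sum>i<m. \<Sum>j<m. \<Sum>l<n. U i a * U j b * W l c * A i j l) =
        (\<Sum>i<k. \<Sum>j<m. \<Sum>l<n. U (i + d) a * U j b * W l c * A (i + d) j l)"
    by (rule sum_lessThan_shift_support[OF fits]) (use supp ab in simp)
  also have "\<dots> = (\<Sum>i<k. \<Sum>j<k. \<Sum>l<n. U (i + d) a * U (j + d) b * W l c * A (i + d) (j + d) l)"
    by (intro sum.cong refl sum_lessThan_shift_support[OF fits]) (use supp ab in simp)
  also have "\<dots> = (\<Sum>i<k. \<Sum>j<k. \<Sum>l<n. U (i + d) a * U (j + d) b * W l c * B i j l)"
    by (intro sum.cong refl) (simp add: agree)
  finally show ?thesis unfolding tmult_def .
qed

lemma orthonormal_cols_block_support:
  assumes "orthonormal_cols m 2 U"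
  shows "orthonormal_cols k 2 (\<lambda>i. U (i + d))"
  unfolding orthonormal_cols_def
proof (intro allI impI)
  fix a b :: nat assume ab: "a < 2" "b < 2"
  have "(\<Sum>i<m. U i a * U i b) = (\<Sum>i<k. U (i + d) a * U (i + d) b)"
    by (rule sum_lessThan_shift_support[OF fits]) (use supp ab in simp)
  then show "(\<Sum>i<k. U (i + d) a * U (i + d) b) = (if a = b then 1 else 0)"
    using assms ab unfolding orthonormal_cols_def by simp
qed

lemma phi_block_support:
  assumes best: "best_sol r m n A U W"
  shows "phi r k n B \<le> phi r m n A - frob_sq m m n A + frob_sq k k n B"
proof -
  let ?V = "\<lambda>i. U (i + d)"
  have "frob_sq 2 2 r (tmult m m n A U U W) = frob_sq 2 2 r (tmult k k n B ?V ?V W)"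
    unfolding frob_sq_def by (intro sum.cong refl) (simp add: tmult_block_support)
  moreover have "phi r k n B \<le> frob_sq k k n B - frob_sq 2 2 r (tmult k k n B ?V ?V W)"
    using best orthonormal_cols_block_support unfolding best_sol_def by (blast intro: phi_le)
  ultimately show ?thesis
    unfolding phi_best_sol[OF best] by linarith
qed

end

lemma sum_lessThan_add:
  fixes f :: "nat \<Rightarrow> real"
  shows "(\<Sum>i<a + b. f i) = (\<Sum>i<a. f i) + (\<Sum>i<b. f (i + a))"
  by (induct b) (simp_all add: ac_simps)

lemma frob_sq_blockdiag:
  assumes "m = m1 + m2" and "\<forall>i<m. \<forall>j<m. \<forall>k<n. A i j k = blockdiag m1 A1 A2 i j k"
  shows "frob_sq m m n A = frob_sq m1 m1 n A1 + frob_sq m2 m2 n A2"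
proof -
  have "frob_sq m m n A = frob_sq m m n (blockdiag m1 A1 A2)"
    unfolding frob_sq_def using assms(2) by (intro sum.cong refl) auto
  also have "\<dots> = frob_sq m1 m1 n A1 + frob_sq m2 m2 n A2"
    unfolding frob_sq_def assms(1) sum_lessThan_add by (simp add: blockdiag_def)
  finally show ?thesis .
qed

lemma phi_blockdiag_first_block:
  assumes dims: "m = m1 + m2" and block: "\<forall>i<m. \<forall>j<m. \<forall>k<n. A i j k = blockdiag m1 A1 A2 i j k"
    and best: "best_sol r m n A U W"
    and supp: "\<And>i a. m1 \<le> i \<Longrightarrow> i < m \<Longrightarrow> a < 2 \<Longrightarrow> U i a = 0"
  shows "phi r m1 n A1 + (tnorm m2 m2 n A2)\<^sup>2 \<le> phi r m n A"
proof -
  have "phi r m1 n A1 \<le> phi r m n A - frob_sq m m n A + frob_sq m1 m1 n A1"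
    by (rule phi_block_support[where d = 0 and U = U, OF _ _ _ best])
      (use dims block supp in \<open>auto simp: blockdiag_def\<close>)
  then show ?thesis
    unfolding tnorm_squared frob_sq_blockdiag[OF dims block] by linarith
qed

lemma phi_blockdiag_second_block:
  assumes dims: "m = m1 + m2" and block: "\<forall>i<m. \<forall>j<m. \<forall>k<n. A i j k = blockdiag m1 A1 A2 i j k"
    and best: "best_sol r m n A U W"
    and supp: "\<And>i a. i < m1 \<Longrightarrow> a < 2 \<Longrightarrow> U i a = 0"
  shows "phi r m2 n A2 + (tnorm m1 m1 n A1)\<^sup>2 \<le> phi r m n A"
proof -
  have "phi r m2 n A2 \<le> phi r m n A - frob_sq m m n A + frob_sq m2 m2 n A2"
    by (rule phi_block_support[where d = m1 and U = U, OF _ _ _ best])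
      (use dims block supp in \<open>auto simp: blockdiag_def\<close>)
  then show ?thesis
    unfolding tnorm_squared frob_sq_blockdiag[OF dims block] by linarith
qed

definition block_diagonal :: "nat \<Rightarrow> nat \<Rightarrow> nat \<Rightarrow> tensor3 \<Rightarrow> bool" where
  "block_diagonal m1 m n A \<longleftrightarrow> (\<forall>i<m. \<forall>j<m. \<forall>k<n. (i < m1) \<noteq> (j < m1) \<longrightarrow> A i j k = 0)"

definition block_sign :: "nat \<Rightarrow> nat \<Rightarrow> real" where
  "block_sign m1 i = (if i < m1 then 1 else -1)"

lemma block_diagonal_blockdiag:
  assumes "\<forall>i<m. \<forall>j<m. \<forall>k<n. A i j k = blockdiag m1 A1 A2 i j k"
  shows "block_diagonal m1 m n A"
  using assms unfolding block_diagonal_def blockdiag_def by auto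

lemma best_sol_block_sign:
  assumes bd: "block_diagonal m1 m n A" and best: "best_sol r m n A U W"
  shows "best_sol r m n A (\<lambda>i a. block_sign m1 i * U i a) W"
proof -
  let ?D = "\<lambda>i a. block_sign m1 i * U i a"
  have "(\<Sum>i<m. ?D i a * ?D i b) = (\<Sum>i<m. U i a * U i b)" for a b
    unfolding block_sign_def by (intro sum.cong refl) auto
  then have "orthonormal_cols m 2 ?D"
    using best unfolding best_sol_def orthonormal_cols_def by simp
  moreover have "tmult m m n A ?D ?D W = tmult m m n A U U W"
    unfolding tmult_def
  proof (intro ext sum.cong refl)
    fix a b c i j k assume "i \<in> {..<m}" "j \<in> {..<m}" "k \<in> {..<n}"
    then show "?D i a * ?D j b * W k c * A i j k = U i a * U j b * W k c * A i j k"
      using bd unfolding block_diagonal_def block_sign_def by auto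
  qed
  ultimately show ?thesis
    using best unfolding best_sol_def by simp
qed

lemma phi_blockdiag_block_sign_scalar:
  assumes dims: "m = m1 + m2" and block: "\<forall>i<m. \<forall>j<m. \<forall>k<n. A i j k = blockdiag m1 A1 A2 i j k"
    and best: "best_sol r m n A U W" and \<epsilon>: "\<epsilon> = 1 \<or> \<epsilon> = -1"
    and scalar: "\<And>i a. i < m \<Longrightarrow> a < 2 \<Longrightarrow> block_sign m1 i * U i a = \<epsilon> * U i a"
  shows "phi r m1 n A1 + (tnorm m2 m2 n A2)\<^sup>2 \<le> phi r m n A \<or>
         phi r m2 n A2 + (tnorm m1 m1 n A1)\<^sup>2 \<le> phi r m n A"
  using \<epsilon>
proof
  assume "\<epsilon> = 1"
  then have "U i a = 0" if "m1 \<le> i" "i < m" "a < 2" for i a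
    using scalar[of i a] that by (simp add: block_sign_def)
  then show ?thesis
    using phi_blockdiag_first_block[OF dims block best] by blast
next
  assume "\<epsilon> = -1"
  then have "U i a = 0" if "i < m1" "a < 2" for i a
    using scalar[of i a] that dims by (simp add: block_sign_def)
  then show ?thesis
    using phi_blockdiag_second_block[OF dims block best] by blast
qed

text \<open>The matrix relating U to its sign flip is U^T D U, hence symmetric.\<close>

lemma block_sign_symmetric_orthogonal:
  assumes oU: "orthonormal_cols m 2 U"
    and eq: "sol_equiv r m n U W (\<lambda>i a. block_sign m1 i * U i a) W'"
  obtains p q t where "p\<^sup>2 + q\<^sup>2 = 1" "q\<^sup>2 + t\<^sup>2 = 1" "p * q + q * t = 0"
    "\<And>i. i < m \<Longrightarrow> block_sign m1 i * U i 0 = p * U i 0 + q * U i 1"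
    "\<And>i. i < m \<Longrightarrow> block_sign m1 i * U i 1 = q * U i 0 + t * U i 1"
proof -
  obtain Q where oQ: "orthonormal_cols 2 2 Q"
    and DUQ: "\<And>i a. i < m \<Longrightarrow> a < 2 \<Longrightarrow> block_sign m1 i * U i a = U i 0 * Q 0 a + U i 1 * Q 1 a"
    using eq unfolding sol_equiv_def by (auto simp: numeral_2_eq_2)
  have Q_eq: "Q b a = (\<Sum>i<m. U i b * (block_sign m1 i * U i a))" if "a < 2" "b < 2" for a b
  proof -
    have "(\<Sum>i<m. U i b * (block_sign m1 i * U i a)) = (\<Sum>i<m. U i b * (U i 0 * Q 0 a + U i 1 * Q 1 a))"
      using DUQ that by (intro sum.cong refl) auto
    also have "\<dots> = (\<Sum>i<m. U i b * U i 0) * Q 0 a + (\<Sum>i<m. U i b * U i 1) * Q 1 a"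
      by (simp add: distrib_left sum.distrib sum_distrib_left sum_distrib_right mult_ac)
    also have "\<dots> = Q b a"
      using that oU unfolding orthonormal_cols_def by (auto simp: less_2_cases_iff)
    finally show ?thesis by simp
  qed
  have sym: "Q 1 0 = Q 0 1"
    using Q_eq[of 0 1] Q_eq[of 1 0] by (simp add: mult_ac)
  have Qo: "Q 0 a * Q 0 b + Q 1 a * Q 1 b = (if a = b then 1 else 0)" if "a < 2" "b < 2" for a b
    using oQ that unfolding orthonormal_cols_def by (simp add: numeral_2_eq_2)
  show thesis
  proof (rule that[of "Q 0 0" "Q 0 1" "Q 1 1"])
    show "(Q 0 0)\<^sup>2 + (Q 0 1)\<^sup>2 = 1" using Qo[of 0 0] sym by (simp add: power2_eq_square)
    show "(Q 0 1)\<^sup>2 + (Q 1 1)\<^sup>2 = 1" using Qo[of 1 1] by (simp add: power2_eq_square)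
    show "Q 0 0 * Q 0 1 + Q 0 1 * Q 1 1 = 0" using Qo[of 0 1] sym by simp
  qed (use DUQ[of _ 0] DUQ[of _ 1] sym in simp_all)
qed

lemma symmetric_orthogonal_2x2_cases:
  fixes p q t :: real
  assumes "p\<^sup>2 + q\<^sup>2 = 1" "q\<^sup>2 + t\<^sup>2 = 1" "p * q + q * t = 0"
  shows "(q = 0 \<and> t = p \<and> (p = 1 \<or> p = -1)) \<or> t = - p"
proof (cases "t = - p")
  case False
  have "q * (p + t) = 0" using assms(3) by (simp add: algebra_simps)
  then have "q = 0" using False by auto
  then show ?thesis using assms(1,2) False by (auto simp: power2_eq_1_iff)
qed simp

lemma reflection_unit_eigenvector:
  fixes p q :: real
  assumes pq: "p\<^sup>2 + q\<^sup>2 = 1"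
  obtains c s where "c\<^sup>2 + s\<^sup>2 = 1" "p * c + q * s = c" "q * c - p * s = s"
proof (cases "p = -1")
  case True
  then have "q = 0" using pq by simp
  then show ?thesis using that[of 0 1] True by simp
next
  case False
  have "p\<^sup>2 \<le> 1" using pq by (metis le_add_same_cancel1 zero_le_power2)
  then have "-1 \<le> p" unfolding abs_square_le_1 by linarith
  with False have pos: "0 < 2 + 2 * p" by simp
  define N where "N = sqrt (2 + 2 * p)"
  have N: "0 < N" "N\<^sup>2 = 2 + 2 * p" using pos unfolding N_def by auto
  show ?thesis
  proof (rule that[of "(1 + p) / N" "q / N"])
    show "((1 + p) / N)\<^sup>2 + (q / N)\<^sup>2 = 1"
      using N pq pos by (simp add: power_divide add_divide_distrib[symmetric] power2_eq_square algebra_simps)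
    show "p * ((1 + p) / N) + q * (q / N) = (1 + p) / N"
      using N pq by (simp add: field_simps power2_eq_square)
    show "q * ((1 + p) / N) - p * (q / N) = q / N"
      using N by (simp add: field_simps)
  qed
qed

definition rotate_cols :: "real \<Rightarrow> real \<Rightarrow> matr \<Rightarrow> matr" where
  "rotate_cols c s U = (\<lambda>i a. if a = 0 then c * U i 0 + s * U i 1 else - s * U i 0 + c * U i 1)"

definition tform :: "nat \<Rightarrow> nat \<Rightarrow> tensor3 \<Rightarrow> matr \<Rightarrow> (nat \<Rightarrow> real) \<Rightarrow> (nat \<Rightarrow> real) \<Rightarrow> nat \<Rightarrow> real" where
  "tform m n A W x y c = (\<Sum>i<m. \<Sum>j<m. \<Sum>k<n. x i * y j * W k c * A i j k)"

lemma tmult_eq_tform: "tmult m m n A X Y W a b c = tform m n A W (\<lambda>i. X i a) (\<lambda>i. Y i b) c"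
  unfolding tmult_def tform_def ..

lemma tform_linear_left:
  "tform m n A W (\<lambda>i. \<alpha> * x i + \<beta> * x' i) y c = \<alpha> * tform m n A W x y c + \<beta> * tform m n A W x' y c"
  unfolding tform_def by (simp add: algebra_simps sum.distrib sum_distrib_left)

lemma tform_linear_right:
  "tform m n A W x (\<lambda>i. \<alpha> * y i + \<beta> * y' i) c = \<alpha> * tform m n A W x y c + \<beta> * tform m n A W x y' c"
  unfolding tform_def by (simp add: algebra_simps sum.distrib sum_distrib_left)

lemma orthonormal_cols_rotate_cols:
  assumes cs: "c\<^sup>2 + s\<^sup>2 = 1" and oU: "orthonormal_cols m 2 U"
  shows "orthonormal_cols m 2 (rotate_cols c s U)"
proof -
  have o: "(\<Sum>i<m. U i a * U i b) = (if a = b then 1 else 0)" if "a < 2" "b < 2" for a b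
    using oU that unfolding orthonormal_cols_def by blast
  have gram: "(\<Sum>i<m. (\<alpha> * U i 0 + \<beta> * U i 1) * (\<gamma> * U i 0 + \<delta> * U i 1)) = \<alpha> * \<gamma> + \<beta> * \<delta>"
    for \<alpha> \<beta> \<gamma> \<delta>
  proof -
    have "(\<Sum>i<m. (\<alpha> * U i 0 + \<beta> * U i 1) * (\<gamma> * U i 0 + \<delta> * U i 1)) =
      \<alpha> * \<gamma> * (\<Sum>i<m. U i 0 * U i 0) + \<alpha> * \<delta> * (\<Sum>i<m. U i 0 * U i 1)
      + \<beta> * \<gamma> * (\<Sum>i<m. U i 1 * U i 0) + \<beta> * \<delta> * (\<Sum>i<m. U i 1 * U i 1)"
      by (simp add: algebra_simps sum.distrib sum_distrib_left)
    then show ?thesis using o[of 0 0] o[of 0 1] o[of 1 0] o[of 1 1] by simp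
  qed
  show ?thesis
    unfolding orthonormal_cols_def
  proof (intro allI impI)
    fix a b :: nat assume "a < 2" "b < 2"
    then have "a = 0 \<or> a = 1" "b = 0 \<or> b = 1" by auto
    then show "(\<Sum>i<m. rotate_cols c s U i a * rotate_cols c s U i b) = (if a = b then 1 else 0)"
      using cs gram[of c s c s] gram[of c s "-s" c] gram[of "-s" c c s] gram[of "-s" c "-s" c]
      unfolding rotate_cols_def by (auto simp: power2_eq_square algebra_simps)
  qed
qed

lemma frob_sq_tmult_rotate_cols:
  assumes cs: "c\<^sup>2 + s\<^sup>2 = 1"
  shows "frob_sq 2 2 r (tmult m m n A (rotate_cols c s U) (rotate_cols c s U) W) =
         frob_sq 2 2 r (tmult m m n A U U W)"
proof -
  let ?F = "tmult m m n A U U W" and ?V = "rotate_cols c s U"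
  have col0: "(\<lambda>i. ?V i 0) = (\<lambda>i. c * U i 0 + s * U i 1)"
    and col1: "(\<lambda>i. ?V i 1) = (\<lambda>i. (- s) * U i 0 + c * U i 1)"
    unfolding rotate_cols_def by auto
  have F': "tmult m m n A ?V ?V W 0 0 k = c * (c * ?F 0 0 k + s * ?F 0 1 k) + s * (c * ?F 1 0 k + s * ?F 1 1 k)"
    "tmult m m n A ?V ?V W 0 1 k = c * (- s * ?F 0 0 k + c * ?F 0 1 k) + s * (- s * ?F 1 0 k + c * ?F 1 1 k)"
    "tmult m m n A ?V ?V W 1 0 k = (- s) * (c * ?F 0 0 k + s * ?F 0 1 k) + c * (c * ?F 1 0 k + s * ?F 1 1 k)"
    "tmult m m n A ?V ?V W 1 1 k = (- s) * (- s * ?F 0 0 k + c * ?F 0 1 k) + c * (- s * ?F 1 0 k + c * ?F 1 1 k)"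
    for k
    unfolding tmult_eq_tform col0 col1 tform_linear_left tform_linear_right
    by (simp_all add: algebra_simps)
  have frob_sq_2x2: "frob_sq 2 2 r T = (\<Sum>k<r. (T 0 0 k)\<^sup>2 + (T 0 1 k)\<^sup>2 + (T 1 0 k)\<^sup>2 + (T 1 1 k)\<^sup>2)"
    for T
    unfolding frob_sq_def by (simp add: numeral_2_eq_2 sum.distrib)
  have "(c * (c * x + s * y) + s * (c * z + s * w))\<^sup>2 + (c * (- s * x + c * y) + s * (- s * z + c * w))\<^sup>2
    + ((- s) * (c * x + s * y) + c * (c * z + s * w))\<^sup>2 + ((- s) * (- s * x + c * y) + c * (- s * z + c * w))\<^sup>2
    = (c\<^sup>2 + s\<^sup>2)\<^sup>2 * (x\<^sup>2 + y\<^sup>2 + z\<^sup>2 + w\<^sup>2)" for x y z w :: real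
    by algebra
  then show ?thesis
    unfolding frob_sq_2x2 F' using cs by simp
qed

lemma best_sol_rotate_cols:
  assumes cs: "c\<^sup>2 + s\<^sup>2 = 1" and best: "best_sol r m n A U W"
  shows "best_sol r m n A (rotate_cols c s U) W"
  using best orthonormal_cols_rotate_cols[OF cs] frob_sq_tmult_rotate_cols[OF cs]
  unfolding best_sol_def tnorm_le_iff by simp

text \<open>Here (c, s) is a unit eigenvector for the eigenvalue 1 of the reflection
  [[p, q], [q, -p]] by which the sign flip acts on the columns of U.\<close>

lemma block_sign_rotate_cols:
  assumes rel0: "block_sign m1 i * U i 0 = p * U i 0 + q * U i 1"
    and rel1: "block_sign m1 i * U i 1 = q * U i 0 - p * U i 1"
    and e1: "p * c + q * s = c" and e2: "q * c - p * s = s"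
  shows "block_sign m1 i * rotate_cols c s U i 0 = rotate_cols c s U i 0"
    and "block_sign m1 i * rotate_cols c s U i 1 = - rotate_cols c s U i 1"
proof -
  have "block_sign m1 i * rotate_cols c s U i 0 = c * (block_sign m1 i * U i 0) + s * (block_sign m1 i * U i 1)"
    unfolding rotate_cols_def by (simp add: algebra_simps)
  also have "\<dots> = U i 0 * (p * c + q * s) + U i 1 * (q * c - p * s)"
    unfolding rel0 rel1 by (simp add: algebra_simps)
  finally show "block_sign m1 i * rotate_cols c s U i 0 = rotate_cols c s U i 0"
    unfolding e1 e2 rotate_cols_def by simp
  have "block_sign m1 i * rotate_cols c s U i 1 = - s * (block_sign m1 i * U i 0) + c * (block_sign m1 i * U i 1)"
    unfolding rotate_cols_def by (simp add: algebra_simps)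
  also have "\<dots> = U i 0 * (q * c - p * s) - U i 1 * (p * c + q * s)"
    unfolding rel0 rel1 by (simp add: algebra_simps)
  finally show "block_sign m1 i * rotate_cols c s U i 1 = - rotate_cols c s U i 1"
    unfolding e1 e2 rotate_cols_def by simp
qed

lemma tmult_offdiag_eq_0:
  assumes bd: "block_diagonal m1 m n A"
    and supp0: "\<And>i. m1 \<le> i \<Longrightarrow> i < m \<Longrightarrow> V i 0 = 0"
    and supp1: "\<And>i. i < m1 \<Longrightarrow> V i 1 = 0"
  shows "tmult m m n A V V W 0 1 c = 0" and "tmult m m n A V V W 1 0 c = 0"
proof -
  have "V i a * V j b * W k c * A i j k = 0"
    if "i < m" "j < m" "k < n" "(a, b) = (0, 1) \<or> (a, b) = (1, 0)" for i j k a b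
    using that bd supp0[of i] supp0[of j] supp1[of i] supp1[of j]
    unfolding block_diagonal_def by (cases "i < m1"; cases "j < m1") auto
  then show "tmult m m n A V V W 0 1 c = 0" and "tmult m m n A V V W 1 0 c = 0"
    unfolding tmult_def by (auto intro!: sum.neutral)
qed

lemma split_best_sol_of_reflection:
  assumes bd: "block_diagonal m1 m n A" and "m1 \<le> m" and best: "best_sol r m n A U W"
    and pq: "p\<^sup>2 + q\<^sup>2 = 1"
    and rel0: "\<And>i. i < m \<Longrightarrow> block_sign m1 i * U i 0 = p * U i 0 + q * U i 1"
    and rel1: "\<And>i. i < m \<Longrightarrow> block_sign m1 i * U i 1 = q * U i 0 - p * U i 1"
  shows "\<exists>V. best_sol r m n A V W \<and>
           (\<forall>i<m1. V i 1 = 0) \<and> (\<forall>i. m1 \<le> i \<and> i < m \<longrightarrow> V i 0 = 0) \<and>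
           (\<forall>c. tmult m m n A V V W 0 1 c = 0 \<and> tmult m m n A V V W 1 0 c = 0)"
proof -
  obtain c s where cs: "c\<^sup>2 + s\<^sup>2 = 1" and e: "p * c + q * s = c" "q * c - p * s = s"
    using reflection_unit_eigenvector[OF pq] .
  define V where "V = rotate_cols c s U"
  have sign: "block_sign m1 i * V i 0 = V i 0" "block_sign m1 i * V i 1 = - V i 1" if "i < m" for i
    unfolding V_def using block_sign_rotate_cols[where U = U and i = i, OF rel0[OF that] rel1[OF that] e]
    by blast+
  have supp0: "V i 0 = 0" if "m1 \<le> i" "i < m" for i
    using sign(1)[of i] that by (simp add: block_sign_def)
  have supp1: "V i 1 = 0" if "i < m1" for i
    using sign(2)[of i] that \<open>m1 \<le> m\<close> by (simp add: block_sign_def)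
  have "best_sol r m n A V W"
    unfolding V_def using cs best by (rule best_sol_rotate_cols)
  then show ?thesis
    using supp0 supp1 tmult_offdiag_eq_0[where V = V, OF bd supp0 supp1] by blast
qed

theorem proposition5p2:
  fixes m1 m2 m n r3 :: nat and A A1 A2 :: tensor3
  assumes r3: "r3 = 1 \<or> r3 = 2"
    and dims: "m = m1 + m2" "2 \<le> m1" "2 \<le> m2" "r3 \<le> n"
    and sym: "sym12 m n A"
    and nonneg: "nonneg_tensor m n A"
    and block: "\<forall>i<m. \<forall>j<m. \<forall>k<n. A i j k = blockdiag m1 A1 A2 i j k"
    and irr1: "irreducible_tensor m1 n A1"
    and irr2: "irreducible_tensor m2 n A2"
    and ineq1: "phi r3 m n A < phi r3 m1 n A1 + (tnorm m2 m2 n A2)\<^sup>2"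
    and ineq2: "phi r3 m n A < phi r3 m2 n A2 + (tnorm m1 m1 n A1)\<^sup>2"
    and uniq: "unique_sol r3 m n A"
  shows "\<exists>U W. best_sol r3 m n A U W \<and>
           (\<forall>i<m1. U i 1 = 0) \<and> (\<forall>i. m1 \<le> i \<and> i < m \<longrightarrow> U i 0 = 0) \<and>
           (\<forall>c<r3. tmult m m n A U U W 0 1 c = 0 \<and> tmult m m n A U U W 1 0 c = 0)"
proof -
  obtain U W where best: "best_sol r3 m n A U W"
    and all: "\<forall>U' W'. best_sol r3 m n A U' W' \<longrightarrow> sol_equiv r3 m n U W U' W'"
    using uniq unfolding unique_sol_def by blast
  have bd: "block_diagonal m1 m n A"
    using block by (rule block_diagonal_blockdiag)
  have oU: "orthonormal_cols m 2 U"
    using best unfolding best_sol_def by blast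
  have "sol_equiv r3 m n U W (\<lambda>i a. block_sign m1 i * U i a) W"
    using all best_sol_block_sign[OF bd best] by blast
  then obtain p q t where pq: "p\<^sup>2 + q\<^sup>2 = 1" and qt: "q\<^sup>2 + t\<^sup>2 = 1" and pqt: "p * q + q * t = 0"
    and rel0: "\<And>i. i < m \<Longrightarrow> block_sign m1 i * U i 0 = p * U i 0 + q * U i 1"
    and rel1: "\<And>i. i < m \<Longrightarrow> block_sign m1 i * U i 1 = q * U i 0 + t * U i 1"
    using block_sign_symmetric_orthogonal[OF oU] by blast
  have "t = - p"
  proof (rule ccontr)
    assume "t \<noteq> - p"
    then have Q: "q = 0" "t = p" "p = 1 \<or> p = -1"
      using symmetric_orthogonal_2x2_cases[OF pq qt pqt] by auto
    then have "block_sign m1 i * U i a = p * U i a" if "i < m" "a < 2" for i a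
      using rel0[OF that(1)] rel1[OF that(1)] that(2) by (auto simp: less_2_cases_iff)
    then show False
      using phi_blockdiag_block_sign_scalar[OF dims(1) block best Q(3)] ineq1 ineq2 by fastforce
  qed
  then have "\<exists>V. best_sol r3 m n A V W \<and>
      (\<forall>i<m1. V i 1 = 0) \<and> (\<forall>i. m1 \<le> i \<and> i < m \<longrightarrow> V i 0 = 0) \<and>
      (\<forall>c. tmult m m n A V V W 0 1 c = 0 \<and> tmult m m n A V V W 1 0 c = 0)"
    using split_best_sol_of_reflection[OF bd _ best pq rel0] rel1 dims(1) by simp
  then show ?thesis by blast
qed

end
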